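(* Let $X$ and $Y$ be real separated locally convex spaces, $U\subseteq X$ and $V\subseteq Y$ convex sets, and $A:X\to Y$ a linear continuous mapping. Then $$(0,0)\in {}^{ic}\big(U\times V-\Delta_X^A\big)\iff 0\in {}^{ic}\big(V-A(U)\big).$$
   Context: $\Delta_X^A:=\{(x,Ax):x\in X\}\subseteq X\times Y$. For a set $D$ in a real separated locally convex space $E$: $\operatorname{aff}D$ is its affine hull; $\operatorname{icr}D=\{u\in E:\forall x\in\operatorname{aff}(D-D)\ \exists\delta>0\ \forall\lambda\in[0,\delta]:\ u+\lambda x\in D\}$; the intrinsic relative algebraic interior is ${}^{ic}D=\operatorname{icr}D$ if $\operatorname{aff}D$ is closed and ${}^{ic}D=\emptyset$ otherwise. *)

theory Defs
  imports "HOL-Analysis.Analysis"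
begin

definition sep_lcs :: "'a::real_vector topology \<Rightarrow> bool" where
  "sep_lcs T \<longleftrightarrow> topspace T = UNIV \<and> Hausdorff_space T
     \<and> continuous_map (prod_topology T T) T (\<lambda>(x, y). x + y)
     \<and> continuous_map (prod_topology euclideanreal T) T (\<lambda>(c, x). c *\<^sub>R x)
     \<and> (\<forall>x W. openin T W \<and> x \<in> W \<longrightarrow> (\<exists>V. openin T V \<and> convex V \<and> x \<in> V \<and> V \<subseteq> W))"

definition msub :: "'a::ab_group_add set \<Rightarrow> 'a set \<Rightarrow> 'a set" where
  "msub C D = {c - d | c d. c \<in> C \<and> d \<in> D}"

definition graph_set :: "('a \<Rightarrow> 'b) \<Rightarrow> ('a \<times> 'b) set" where
  "graph_set A = {(x, A x) | x. True}"

definition icr :: "'a::real_vector set \<Rightarrow> 'a set" where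
  "icr D = {u. \<forall>x \<in> affine hull (msub D D). \<exists>\<delta>>0. \<forall>t\<in>{0..\<delta>}. u + t *\<^sub>R x \<in> D}"

definition ic :: "'a::real_vector topology \<Rightarrow> 'a set \<Rightarrow> 'a set" where
  "ic T D = (if closedin T (affine hull D) then icr D else {})"

end

theory Submission
  imports Defs
begin

text \<open>
  Put \<open>W = V - A(U)\<close> and \<open>\<Phi>(x, y) = y - A x\<close>.  A point \<open>(u - x, v - A x)\<close>
  of \<open>U \<times> V - \<Delta>\<^sub>X\<^sup>A\<close> is mapped by \<open>\<Phi>\<close> to \<open>v - A u \<in> W\<close>, and conversely, so
  \<open>U \<times> V - \<Delta>\<^sub>X\<^sup>A = \<Phi>\<^sup>-\<^sup>1(W)\<close>.  The map \<open>\<Phi>\<close> is a continuous linear surjection with the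
  continuous linear right inverse \<open>w \<mapsto> (0, w)\<close>.  Everything in the definition of the
  intrinsic relative algebraic interior is compatible with taking preimages under such a map:
   \<^item> preimages under a linear surjection commute with affine hulls and with \<open>D - D\<close>;
   \<^item> hence \<open>x \<in> icr (f\<^sup>-\<^sup>1 W) \<longleftrightarrow> f x \<in> icr W\<close> for a linear surjection \<open>f\<close>;
   \<^item> a set is closed iff its preimage under a continuous map with a continuous right
     inverse is closed.
\<close>

lemma affine_linear_vimage:
  assumes "linear f" and "affine T"
  shows "affine (f -` T)"
  using assms(2) unfolding affine_def by (simp add: linear_add[OF assms(1)] linear_scale[OF assms(1)])

lemma affine_linear_image:
  assumes "linear f" and "affine T"
  shows "affine (f ` T)"
  unfolding affine_def
proof (intro ballI allI impI)
  fix x y u v assume "x \<in> f ` T" "y \<in> f ` T" and uv: "u + v = (1::real)"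
  then obtain a b where ab: "a \<in> T" "b \<in> T" and xy: "x = f a" "y = f b" by auto
  have "u *\<^sub>R a + v *\<^sub>R b \<in> T"
    using assms(2) ab uv unfolding affine_def by blast
  moreover have "u *\<^sub>R x + v *\<^sub>R y = f (u *\<^sub>R a + v *\<^sub>R b)"
    using assms(1) xy by (simp add: linear_add linear_scale)
  ultimately show "u *\<^sub>R x + v *\<^sub>R y \<in> f ` T" by simp
qed

text \<open>The inclusion
  \<open>\<supseteq>\<close> uses that \<open>f\<^sup>-\<^sup>1 S\<close>, and hence its affine hull, is invariant under translation
  by elements of the kernel.\<close>
lemma affine_hull_linear_vimage:
  fixes f :: "'a::real_vector \<Rightarrow> 'b::real_vector"
  assumes "linear f" and "surj f"
  shows "affine hull (f -` S) = f -` (affine hull S)"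
proof
  have "affine (f -` (affine hull S))"
    using affine_linear_vimage[OF assms(1) affine_affine_hull] .
  then show "affine hull (f -` S) \<subseteq> f -` (affine hull S)"
    by (intro hull_minimal) (auto intro: hull_inc)
next
  show "f -` (affine hull S) \<subseteq> affine hull (f -` S)"
  proof
    fix p assume "p \<in> f -` (affine hull S)"
    moreover have "affine hull S \<subseteq> f ` (affine hull (f -` S))"
    proof (rule hull_minimal)
      show "S \<subseteq> f ` (affine hull (f -` S))"
        using assms(2) hull_subset[of "f -` S" affine]
        by (metis image_mono surj_image_vimage_eq)
      show "affine (f ` (affine hull (f -` S)))"
        using affine_linear_image[OF assms(1) affine_affine_hull] .
    qed
    ultimately have "f p \<in> f ` (affine hull (f -` S))" by auto
    then obtain q where q: "q \<in> affine hull (f -` S)" and fq: "f q = f p"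
      by auto
    have kernel: "f (p - q) = 0"
      using fq assms(1) by (simp add: linear_diff)
    have "(\<lambda>x. (p - q) + x) ` (f -` S) = f -` S"
    proof (rule set_eqI)
      fix x :: 'a
      have "f ((p - q) + x) = f x" and "f (x - (p - q)) = f x"
        using kernel assms(1) by (simp_all add: linear_add linear_diff)
      then show "x \<in> (\<lambda>x. (p - q) + x) ` (f -` S) \<longleftrightarrow> x \<in> f -` S"
        by (auto intro!: rev_image_eqI[of "x - (p - q)"])
    qed
    then have "(\<lambda>x. (p - q) + x) ` (affine hull (f -` S)) = affine hull (f -` S)"
      by (simp add: affine_hull_translation[symmetric])
    moreover have "p = (p - q) + q" by simp
    ultimately show "p \<in> affine hull (f -` S)"
      using q by (metis image_eqI)
  qed
qed

lemma msub_linear_vimage: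
  assumes "linear f" and "surj f"
  shows "msub (f -` S) (f -` S) = f -` (msub S S)"
proof (rule set_eqI, rule iffI)
  fix p assume "p \<in> msub (f -` S) (f -` S)"
  then obtain c d where cd: "f c \<in> S" "f d \<in> S" and p: "p = c - d"
    by (auto simp: msub_def)
  have "f p = f c - f d"
    using assms(1) p by (simp add: linear_diff)
  with cd show "p \<in> f -` (msub S S)"
    unfolding msub_def by blast
next
  fix p assume "p \<in> f -` (msub S S)"
  then obtain a b where ab: "a \<in> S" "b \<in> S" "f p = a - b"
    by (auto simp: msub_def)
  obtain q where q: "f q = b"
    using assms(2) by (metis surjD)
  have "f (p + q) = a"
    using ab(3) q assms(1) by (simp add: linear_add)
  then show "p \<in> msub (f -` S) (f -` S)"
    unfolding msub_def using ab q by (intro CollectI exI[of _ "p + q"] exI[of _ q]) auto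
qed

text \<open>The relative algebraic interior is compatible with preimages under a linear
  surjection: directions in the preimage project onto the directions of \<open>W\<close>.\<close>
lemma icr_linear_vimage:
  assumes "linear f" and "surj f"
  shows "x \<in> icr (f -` W) \<longleftrightarrow> f x \<in> icr W"
proof -
  have dirs: "affine hull (msub (f -` W) (f -` W)) = f -` (affine hull (msub W W))"
    using assms by (simp add: msub_linear_vimage affine_hull_linear_vimage)
  have ray: "f (x + t *\<^sub>R q) = f x + t *\<^sub>R f q" for t q
    using assms(1) by (simp add: linear_add linear_scale)
  show ?thesis
  proof
    assume x: "x \<in> icr (f -` W)"
    show "f x \<in> icr W" unfolding icr_def
    proof (intro CollectI ballI)
      fix z assume "z \<in> affine hull (msub W W)"
      moreover obtain q where q: "f q = z"
        using assms(2) by (metis surjD)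
      ultimately have "q \<in> affine hull (msub (f -` W) (f -` W))"
        unfolding dirs by simp
      with x obtain \<delta> where "\<delta> > 0" "\<forall>t\<in>{0..\<delta>}. x + t *\<^sub>R q \<in> f -` W"
        unfolding icr_def by blast
      then show "\<exists>\<delta>>0. \<forall>t\<in>{0..\<delta>}. f x + t *\<^sub>R z \<in> W"
        using q ray by auto
    qed
  next
    assume fx: "f x \<in> icr W"
    show "x \<in> icr (f -` W)" unfolding icr_def
    proof (intro CollectI ballI)
      fix q assume "q \<in> affine hull (msub (f -` W) (f -` W))"
      then have "f q \<in> affine hull (msub W W)"
        unfolding dirs by simp
      with fx obtain \<delta> where "\<delta> > 0" "\<forall>t\<in>{0..\<delta>}. f x + t *\<^sub>R f q \<in> W"
        unfolding icr_def by blast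
      then show "\<exists>\<delta>>0. \<forall>t\<in>{0..\<delta>}. x + t *\<^sub>R q \<in> f -` W"
        using ray by auto
    qed
  qed
qed

text \<open>Closedness transfers along a continuous map that has a continuous right inverse:
  the set is recovered as the preimage of its preimage under the right inverse.\<close>
lemma closedin_vimage_iff_section:
  assumes f: "continuous_map S T f" and s: "continuous_map T S s"
    and fs: "\<And>y. y \<in> topspace T \<Longrightarrow> f (s y) = y"
    and C: "C \<subseteq> topspace T"
  shows "closedin S {x \<in> topspace S. f x \<in> C} \<longleftrightarrow> closedin T C"
proof
  assume "closedin S {x \<in> topspace S. f x \<in> C}"
  from closedin_continuous_map_preimage[OF s this]
  have "closedin T {y \<in> topspace T. s y \<in> {x \<in> topspace S. f x \<in> C}}" .
  moreover have "{y \<in> topspace T. s y \<in> {x \<in> topspace S. f x \<in> C}} = C"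
    using C fs continuous_map_image_subset_topspace[OF s] by auto
  ultimately show "closedin T C" by simp
next
  assume "closedin T C"
  then show "closedin S {x \<in> topspace S. f x \<in> C}"
    by (rule closedin_continuous_map_preimage[OF f])
qed

lemma sep_lcs_continuous_map_diff:
  assumes T: "sep_lcs T"
    and f: "continuous_map S T f" and g: "continuous_map S T g"
  shows "continuous_map S T (\<lambda>x. f x - g x)"
proof -
  have add: "continuous_map (prod_topology T T) T (\<lambda>(x, y). x + y)"
   and scale: "continuous_map (prod_topology euclideanreal T) T (\<lambda>(c, x). c *\<^sub>R x)"
    using T by (auto simp: sep_lcs_def)
  have "continuous_map S (prod_topology euclideanreal T) (\<lambda>x. (-1, g x))"
    using g by (intro continuous_map_pairedI) auto
  from continuous_map_compose[OF this scale]
  have "continuous_map S T (\<lambda>x. (-1) *\<^sub>R g x)" by (simp add: o_def)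
  with f have "continuous_map S (prod_topology T T) (\<lambda>x. (f x, (-1) *\<^sub>R g x))"
    by (intro continuous_map_pairedI)
  from continuous_map_compose[OF this add] show ?thesis by (simp add: o_def)
qed

lemma msub_graph_eq_vimage:
  assumes "linear A"
  shows "msub (U \<times> V) (graph_set A) = (\<lambda>p. snd p - A (fst p)) -` msub V (A ` U)"
proof (rule set_eqI, rule iffI)
  fix p assume "p \<in> msub (U \<times> V) (graph_set A)"
  then obtain u v x where uv: "u \<in> U" "v \<in> V" and p: "p = (u - x, v - A x)"
    by (auto simp: msub_def graph_set_def)
  then have "snd p - A (fst p) = v - A u"
    using assms by (simp add: linear_diff)
  with uv show "p \<in> (\<lambda>p. snd p - A (fst p)) -` msub V (A ` U)"
    unfolding msub_def by blast
next
  fix p assume "p \<in> (\<lambda>p. snd p - A (fst p)) -` msub V (A ` U)"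
  then obtain u v where uv: "u \<in> U" "v \<in> V" and p: "snd p - A (fst p) = v - A u"
    by (auto simp: msub_def)
  have "p = (u, v) - (u - fst p, A (u - fst p))"
    using p assms by (auto simp: linear_diff algebra_simps prod_eq_iff)
  then show "p \<in> msub (U \<times> V) (graph_set A)"
    using uv unfolding msub_def graph_set_def by blast
qed

theorem lemma1p1:
  fixes TX :: "'a::real_vector topology" and TY :: "'b::real_vector topology"
    and U :: "'a set" and V :: "'b set" and A :: "'a \<Rightarrow> 'b"
  assumes "sep_lcs TX" and "sep_lcs TY"
    and "convex U" and "convex V"
    and "linear A" and "continuous_map TX TY A"
  shows "(0, 0) \<in> ic (prod_topology TX TY) (msub (U \<times> V) (graph_set A))
     \<longleftrightarrow> 0 \<in> ic TY (msub V (A ` U))"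
proof -
  define W where "W = msub V (A ` U)"
  define \<Phi> where "\<Phi> = (\<lambda>p::'a \<times> 'b. snd p - A (fst p))"
  have tops: "topspace TX = UNIV" "topspace TY = UNIV"
    using assms(1,2) by (auto simp: sep_lcs_def)
  have Phi_section: "\<Phi> (0, w) = w" for w
    using assms(5) by (simp add: \<Phi>_def linear_0)
  have lin: "linear \<Phi>"
    unfolding \<Phi>_def
    by (intro linear_compose_sub linear_compose[OF linear_fst assms(5), unfolded o_def] linear_snd)
  have surj: "surj \<Phi>"
    using Phi_section by (metis surjI)
  have cont: "continuous_map (prod_topology TX TY) TY \<Phi>"
    unfolding \<Phi>_def using assms(2,6)
    by (intro sep_lcs_continuous_map_diff continuous_map_snd
        continuous_map_compose[OF continuous_map_fst, unfolded o_def])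
  have cont_section: "continuous_map TY (prod_topology TX TY) (\<lambda>w. (0, w))"
    by (intro continuous_map_pairedI) (auto simp: tops)
  have closed_iff: "closedin (prod_topology TX TY) (\<Phi> -` C) \<longleftrightarrow> closedin TY C" for C
    using closedin_vimage_iff_section[OF cont cont_section, of C] Phi_section
    by (simp add: tops vimage_def)
  show ?thesis
    unfolding msub_graph_eq_vimage[OF assms(5)] ic_def W_def[symmetric] \<Phi>_def[symmetric]
    by (simp add: affine_hull_linear_vimage[OF lin surj] closed_iff
        icr_linear_vimage[OF lin surj] Phi_section[of 0, simplified])
qed

end
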